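(* Let $a,b,e\in\mathbb{R}$ with $b\ne0$, and let $\alpha_i(t)$ ($i=1,\dots,4$) be scalar continuous functions (not necessarily odd). (i) Suppose $b\alpha_1(t)+\alpha_3(t)$ is $2\pi/|b|$-periodic, $a(a+e)<0$, and $\int_0^{2\pi/b}(b\alpha_1(s)+\alpha_3(s))\,ds=0$. Then the solution $$x(t)=\sqrt{-a(a+e)}\sin\Big(bt+\int_0^t(b\alpha_1(s)+\alpha_3(s))ds\Big),\ y(t)=\sqrt{-a(a+e)}\cos\Big(bt+\int_0^t(b\alpha_1(s)+\alpha_3(s))ds\Big),\ z(t)=-a$$ of the system $$\begin{aligned}\dot x&=(ax+by+xz)(1+\alpha_1(t))+x(a+z)\alpha_2(t)+y\alpha_3(t),\\ \dot y&=(-bx+ay+yz)(1+\alpha_1(t))+y(a+z)\alpha_2(t)-x\alpha_3(t),\\ \dot z&=(ez-x^2-y^2-z^2)(1+\alpha_1(t)+\alpha_2(t))\end{aligned}$$ is $2\pi/|b|$-periodic (the period not necessarily minimal). (ii) Suppose $b\alpha_1(t)+\alpha_3(t)+a^4\alpha_4(t)$ is $2\pi/|b|$-periodic and $\int_0^{2\pi/b}(b\alpha_1(s)+\alpha_3(s)+a^4\alpha_4(s))\,ds=0$. Then the solution $$x(t)=a\sin\Big(bt+\int_0^t(b\alpha_1(s)+\alpha_3(s)+a^4\alpha_4(s))ds\Big),\ y(t)=a\cos\Big(bt+\int_0^t(b\alpha_1(s)+\alpha_3(s)+a^4\alpha_4(s))ds\Big),\ z(t)=-a$$ of the system $$\begin{aligned}\dot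 x&=(ax+by+xz)(1+\alpha_1(t))+x(a+z)\alpha_2(t)+y\alpha_3(t)-y(x^2+y^2)(4az+x^2+y^2+2z^2)\alpha_4(t),\\ \dot y&=(-bx+ay+yz)(1+\alpha_1(t))+y(a+z)\alpha_2(t)-x\alpha_3(t)+x(x^2+y^2)(4az+x^2+y^2+2z^2)\alpha_4(t),\\ \dot z&=-(2az+x^2+y^2+z^2)(1+\alpha_1(t)+\alpha_2(t))\end{aligned}$$ is $2\pi/|b|$-periodic (the period not necessarily minimal). *)

theory Defs
  imports "HOL-Analysis.Analysis"
begin

definition periodic_with :: "real \<Rightarrow> (real \<Rightarrow> 'a) \<Rightarrow> bool" where
  "periodic_with p f \<longleftrightarrow> (\<forall>t. f (t + p) = f t)"

end

theory Submission
  imports Defs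
begin

text \<open>
  In both systems the vector field, restricted to the circle x^2 + y^2 = r^2 in the plane
  z = -a (with r^2 = -a(a+e), resp. r = a), is a rotation with time-dependent angular velocity
  b + g(t), where g = b \<alpha>1 + \<alpha>3 (+ a^4 \<alpha>4). Hence (r sin \<theta>, r cos \<theta>, -a) is a solution
  as soon as \<theta>' = b + g, i.e. \<theta>(t) = b t + \<integral>[0,t] g. If g is 2\<pi>/|b|-periodic with zero
  integral over a period, then \<integral>[0,t] g is 2\<pi>/|b|-periodic as well, so \<theta> advances by
  exactly \<plusminus>2\<pi> over each period.
\<close>

lemma has_real_derivative_LBINT_from_0:
  fixes g :: "real \<Rightarrow> real"
  assumes "continuous_on UNIV g"
  shows "((\<lambda>t. LBINT s=0..t. g s) has_real_derivative g x) (at x)"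
proof -
  let ?I = "{min 0 x - 1..max 0 x + 1}"
  have "((\<lambda>t. LBINT s=ereal 0..t. g s) has_vector_derivative g x) (at x within ?I)"
    by (rule interval_integral_FTC2) (auto intro: continuous_on_subset[OF assms])
  moreover have "at x within ?I = at x"
    by (rule at_within_interior) auto
  ultimately show ?thesis
    by (simp add: zero_ereal_def has_real_derivative_iff_has_vector_derivative)
qed

lemma periodic_with_uminus_iff: "periodic_with (- p) f \<longleftrightarrow> periodic_with p f"
  unfolding periodic_with_def by (metis add.commute add_diff_cancel_left' uminus_add_conv_diff)

lemma periodic_with_LBINT_from_0:
  fixes g :: "real \<Rightarrow> real"
  assumes "continuous_on UNIV g" and "periodic_with p g" and "(LBINT s=0..p. g s) = 0"
  shows "periodic_with p (\<lambda>t. LBINT s=0..t. g s)"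
proof -
  define G where "G t = (LBINT s=0..t. g s)" for t :: real
  have "\<forall>x. ((\<lambda>t. G (t + p) - G t) has_real_derivative 0) (at x)"
  proof
    fix x
    have G': "(G has_real_derivative g y) (at y)" for y
      unfolding G_def by (rule has_real_derivative_LBINT_from_0[OF assms(1)])
    have "((\<lambda>t. G (t + p) - G t) has_real_derivative g (x + p) - g x) (at x)"
      using G'[of "x + p"] G'[of x] by (intro DERIV_diff) (simp_all add: DERIV_shift)
    then show "((\<lambda>t. G (t + p) - G t) has_real_derivative 0) (at x)"
      using \<open>periodic_with p g\<close> by (simp add: periodic_with_def)
  qed
  then have "G (t + p) - G t = G (0 + p) - G 0" for t
    using DERIV_isconst_all[of "\<lambda>t. G (t + p) - G t" t 0] by simp
  moreover have "G 0 = 0" and "G p = 0"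
    using assms(3) by (simp_all add: G_def flip: zero_ereal_def)
  ultimately show ?thesis
    by (simp add: periodic_with_def G_def)
qed

lemma periodic_with_phase:
  fixes b :: real and h :: "real \<Rightarrow> 'a" and G :: "real \<Rightarrow> real"
  assumes "b \<noteq> 0" and "periodic_with (2 * pi) h" and "periodic_with (2 * pi / \<bar>b\<bar>) G"
  shows "periodic_with (2 * pi / \<bar>b\<bar>) (\<lambda>t. h (b * t + G t))"
proof -
  have "b * (2 * pi / \<bar>b\<bar>) = 2 * pi \<or> b * (2 * pi / \<bar>b\<bar>) = - (2 * pi)"
    using \<open>b \<noteq> 0\<close> by (cases "b > 0") auto
  then have "periodic_with (b * (2 * pi / \<bar>b\<bar>)) h"
    using assms(2) periodic_with_uminus_iff by metis
  moreover have "b * (t + 2 * pi / \<bar>b\<bar>) + G (t + 2 * pi / \<bar>b\<bar>)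
      = (b * t + G t) + b * (2 * pi / \<bar>b\<bar>)" for t
    using assms(3) by (simp add: periodic_with_def distrib_left)
  ultimately show ?thesis
    unfolding periodic_with_def by metis
qed

lemma periodic_solution_on_rotating_circle:
  fixes b r c :: real and g :: "real \<Rightarrow> real"
    and F G H :: "real \<Rightarrow> real \<Rightarrow> real \<Rightarrow> real \<Rightarrow> real"
  assumes "b \<noteq> 0" and "continuous_on UNIV g"
    and "periodic_with (2 * pi / \<bar>b\<bar>) g" and "(LBINT s=0..(2 * pi / b). g s) = 0"
    and F: "\<And>t u v. u\<^sup>2 + v\<^sup>2 = r\<^sup>2 \<Longrightarrow> F t u v c = (b + g t) * v"
    and G: "\<And>t u v. u\<^sup>2 + v\<^sup>2 = r\<^sup>2 \<Longrightarrow> G t u v c = - (b + g t) * u"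
    and H: "\<And>t u v. u\<^sup>2 + v\<^sup>2 = r\<^sup>2 \<Longrightarrow> H t u v c = 0"
  shows
    "let \<theta> = (\<lambda>t. b * t + (LBINT s=0..t. g s));
         x = (\<lambda>t. r * sin (\<theta> t));
         y = (\<lambda>t. r * cos (\<theta> t));
         z = (\<lambda>t. c)
     in (\<forall>t. (x has_real_derivative F t (x t) (y t) (z t)) (at t)
            \<and> (y has_real_derivative G t (x t) (y t) (z t)) (at t)
            \<and> (z has_real_derivative H t (x t) (y t) (z t)) (at t))
        \<and> periodic_with (2 * pi / \<bar>b\<bar>) x
        \<and> periodic_with (2 * pi / \<bar>b\<bar>) y
        \<and> periodic_with (2 * pi / \<bar>b\<bar>) z"
proof -
  define \<theta> where "\<theta> t = b * t + (LBINT s=0..t. g s)" for t :: real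
  have \<theta>': "(\<theta> has_real_derivative b + g t) (at t)" for t
    unfolding \<theta>_def using has_real_derivative_LBINT_from_0[OF \<open>continuous_on UNIV g\<close>]
    by (auto intro!: derivative_eq_intros)
  have on_circle: "(r * sin (\<theta> t))\<^sup>2 + (r * cos (\<theta> t))\<^sup>2 = r\<^sup>2" for t
    by (simp add: power_mult_distrib flip: distrib_left)
  have "periodic_with (2 * pi / \<bar>b\<bar>) (\<lambda>t. LBINT s=0..t. g s)"
  proof -
    have "2 * pi / b = 2 * pi / \<bar>b\<bar> \<or> 2 * pi / b = - (2 * pi / \<bar>b\<bar>)"
      by (cases "b > 0") auto
    then show ?thesis
      using periodic_with_LBINT_from_0[OF \<open>continuous_on UNIV g\<close>] assms(3,4)
      by (metis periodic_with_uminus_iff)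
  qed
  then have periodic_in_phase: "periodic_with (2 * pi / \<bar>b\<bar>) (\<lambda>t. h (\<theta> t))"
    if "periodic_with (2 * pi) h" for h :: "real \<Rightarrow> real"
    unfolding \<theta>_def using periodic_with_phase[OF \<open>b \<noteq> 0\<close> that] by blast
  show ?thesis
    unfolding Let_def \<theta>_def[symmetric]
  proof (intro conjI allI)
    fix t
    show "((\<lambda>t. r * sin (\<theta> t)) has_real_derivative F t (r * sin (\<theta> t)) (r * cos (\<theta> t)) c) (at t)"
      using F[OF on_circle] by (auto intro!: derivative_eq_intros \<theta>')
    show "((\<lambda>t. r * cos (\<theta> t)) has_real_derivative G t (r * sin (\<theta> t)) (r * cos (\<theta> t)) c) (at t)"
      using G[OF on_circle] by (auto intro!: derivative_eq_intros \<theta>' simp: algebra_simps)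
    show "((\<lambda>t. c) has_real_derivative H t (r * sin (\<theta> t)) (r * cos (\<theta> t)) c) (at t)"
      using H[OF on_circle] by simp
  qed (rule periodic_in_phase, simp add: periodic_with_def)+
qed

theorem theorem5:
  fixes a b e :: real
    and \<alpha>1 \<alpha>2 \<alpha>3 \<alpha>4 :: "real \<Rightarrow> real"
  assumes hb: "b \<noteq> 0"
    and c1: "continuous_on UNIV \<alpha>1" and c2: "continuous_on UNIV \<alpha>2"
    and c3: "continuous_on UNIV \<alpha>3" and c4: "continuous_on UNIV \<alpha>4"
  shows
   "(periodic_with (2 * pi / \<bar>b\<bar>) (\<lambda>t. b * \<alpha>1 t + \<alpha>3 t)
      \<and> a * (a + e) < 0
      \<and> (LBINT s=0..(2 * pi / b). b * \<alpha>1 s + \<alpha>3 s) = 0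
    \<longrightarrow>
     (let \<theta> = (\<lambda>t. b * t + (LBINT s=0..t. b * \<alpha>1 s + \<alpha>3 s));
          x = (\<lambda>t. sqrt (- a * (a + e)) * sin (\<theta> t));
          y = (\<lambda>t. sqrt (- a * (a + e)) * cos (\<theta> t));
          z = (\<lambda>t. - a)
      in (\<forall>t.
            (x has_real_derivative
               ((a * x t + b * y t + x t * z t) * (1 + \<alpha>1 t) + x t * (a + z t) * \<alpha>2 t
                 + y t * \<alpha>3 t)) (at t)
          \<and> (y has_real_derivative
               ((- b * x t + a * y t + y t * z t) * (1 + \<alpha>1 t) + y t * (a + z t) * \<alpha>2 t
                 - x t * \<alpha>3 t)) (at t)
          \<and> (z has_real_derivative
               ((e * z t - (x t)^2 - (y t)^2 - (z t)^2) * (1 + \<alpha>1 t + \<alpha>2 t))) (at t))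
         \<and> periodic_with (2 * pi / \<bar>b\<bar>) x
         \<and> periodic_with (2 * pi / \<bar>b\<bar>) y
         \<and> periodic_with (2 * pi / \<bar>b\<bar>) z))
   \<and>
   (periodic_with (2 * pi / \<bar>b\<bar>) (\<lambda>t. b * \<alpha>1 t + \<alpha>3 t + a^4 * \<alpha>4 t)
      \<and> (LBINT s=0..(2 * pi / b). b * \<alpha>1 s + \<alpha>3 s + a^4 * \<alpha>4 s) = 0
    \<longrightarrow>
     (let \<theta> = (\<lambda>t. b * t + (LBINT s=0..t. b * \<alpha>1 s + \<alpha>3 s + a^4 * \<alpha>4 s));
          x = (\<lambda>t. a * sin (\<theta> t));
          y = (\<lambda>t. a * cos (\<theta> t));
          z = (\<lambda>t. - a)
      in (\<forall>t.
            (x has_real_derivative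
               ((a * x t + b * y t + x t * z t) * (1 + \<alpha>1 t) + x t * (a + z t) * \<alpha>2 t
                 + y t * \<alpha>3 t
                 - y t * ((x t)^2 + (y t)^2) * (4 * a * z t + (x t)^2 + (y t)^2 + 2 * (z t)^2)
                   * \<alpha>4 t)) (at t)
          \<and> (y has_real_derivative
               ((- b * x t + a * y t + y t * z t) * (1 + \<alpha>1 t) + y t * (a + z t) * \<alpha>2 t
                 - x t * \<alpha>3 t
                 + x t * ((x t)^2 + (y t)^2) * (4 * a * z t + (x t)^2 + (y t)^2 + 2 * (z t)^2)
                   * \<alpha>4 t)) (at t)
          \<and> (z has_real_derivative
               (- (2 * a * z t + (x t)^2 + (y t)^2 + (z t)^2) * (1 + \<alpha>1 t + \<alpha>2 t))) (at t))
         \<and> periodic_with (2 * pi / \<bar>b\<bar>) x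
         \<and> periodic_with (2 * pi / \<bar>b\<bar>) y
         \<and> periodic_with (2 * pi / \<bar>b\<bar>) z))"
proof ((intro conjI impI; elim conjE), goal_cases)
  case 1
  have radius: "(sqrt (- a * (a + e)))\<^sup>2 = - a * (a + e)"
    using 1 by simp
  show ?case
  proof (rule periodic_solution_on_rotating_circle)
    show "continuous_on UNIV (\<lambda>s. b * \<alpha>1 s + \<alpha>3 s)"
      by (intro continuous_intros c1 c3)
    fix t u v :: real
    assume "u\<^sup>2 + v\<^sup>2 = (sqrt (- a * (a + e)))\<^sup>2"
    then show "(e * - a - u\<^sup>2 - v\<^sup>2 - (- a)\<^sup>2) * (1 + \<alpha>1 t + \<alpha>2 t) = 0"
      unfolding radius by algebra
  qed ((fact hb 1) | (simp add: algebra_simps))+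
next
  case 2
  show ?case
  proof (rule periodic_solution_on_rotating_circle)
    show "continuous_on UNIV (\<lambda>s. b * \<alpha>1 s + \<alpha>3 s + a^4 * \<alpha>4 s)"
      by (intro continuous_intros c1 c3 c4)
  qed ((fact hb 2) | algebra)+
qed

end
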